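(* Let $A_1,\dots,A_{12}$ be the vertices of a regular icosahedron in $\mathbb R^3$ with centre $O$, and let $\Gamma$ be a sphere centred at $O$. If $\lambda\in\mathbb R$ is such that $M\mapsto\sum_{i=1}^{12}|MA_i|^{\lambda}$ is constant on $\Gamma\setminus\{A_1,\dots,A_{12}\}$, then $\lambda\in\{0,2,4,6,8,10\}$.
   Context: $|MA|$ denotes Euclidean distance. *)

theory Defs
  imports "HOL-Analysis.Analysis"
begin

definition golden :: real where "golden = (1 + sqrt 5) / 2"

definition std_icosahedron :: "(real^3) set" where
  "std_icosahedron =
     {vector [0, s, t * golden] | s t. s \<in> {-1, 1} \<and> t \<in> {-1, 1}} \<union>
     {vector [s, t * golden, 0] | s t. s \<in> {-1, 1} \<and> t \<in> {-1, 1}} \<union>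
     {vector [t * golden, 0, s] | s t. s \<in> {-1, 1} \<and> t \<in> {-1, 1}}"

definition regular_icosahedron :: "(real^3) set \<Rightarrow> real^3 \<Rightarrow> bool" where
  "regular_icosahedron V Ctr \<longleftrightarrow>
     (\<exists>f c. orthogonal_transformation f \<and> c > 0 \<and>
            V = (\<lambda>x. Ctr + c *\<^sub>R f x) ` std_icosahedron)"

end

theory Submission
  imports Defs
begin

text \<open>
  On the sphere \<open>|y| = \<rho>\<close> the distance to a vertex \<open>x\<close> of the standard icosahedron satisfies
  \<open>|y - x| powr \<lambda> = H \<langle>y, x\<rangle>\<close> with \<open>H z = (K - 2 z) powr (\<lambda> / 2)\<close> and \<open>K = \<rho>\<^sup>2 + |x|\<^sup>2\<close>.
  Move \<open>y = a A + b v\<close> along a great circle through a vertex \<open>A\<close>, with \<open>v \<perp> A\<close>. Comparing the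
  constant sum at the points with parameters \<open>b\<close> and \<open>-b\<close>, the terms of \<open>\<plusminus>A\<close> cancel, and what remains
  are odd differences \<open>H (c + b p) - H (c - b p)\<close> at the centres \<open>c = \<plusminus>a \<langle>A, x\<rangle>\<close>, one for each of
  the five neighbours \<open>x\<close> of \<open>A\<close>, with \<open>p = \<langle>v, x\<rangle>\<close>. In their Taylor expansions in \<open>b\<close> the linear
  and cubic terms cancel because the power sums of the five numbers \<open>p\<close> of order 1 and 3 vanish,
  while the one of order 5 does not. Dividing by \<open>b\<^sup>5\<close> and letting \<open>b \<rightarrow> 0\<close> shows that the fifth
  derivative of \<open>H\<close> takes the same value at two distinct points, which is possible only if
  \<open>\<lambda> / 2 \<in> {0, \<dots>, 5}\<close>.
\<close>

lemma odd_difference_Taylor5: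
  fixes f :: "nat \<Rightarrow> real \<Rightarrow> real"
  assumes deriv: "\<And>m t. m < 5 \<Longrightarrow> \<bar>t - z\<bar> \<le> \<bar>d\<bar> \<Longrightarrow> (f m has_real_derivative f (Suc m) t) (at t)"
  shows "\<exists>\<xi>1 \<xi>2. \<bar>\<xi>1 - z\<bar> \<le> \<bar>d\<bar> \<and> \<bar>\<xi>2 - z\<bar> \<le> \<bar>d\<bar> \<and>
           f 0 (z + d) - f 0 (z - d) = 2 * f 1 z * d + f 3 z * d^3 / 3 + (f 5 \<xi>1 + f 5 \<xi>2) * d^5 / 120"
proof -
  have Taylor5: "\<exists>\<xi>. \<bar>\<xi> - z\<bar> \<le> \<bar>d\<bar> \<and> f 0 (z + e) = (\<Sum>m<5. f m z / fact m * e^m) + f 5 \<xi> / fact 5 * e^5"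
    if "\<bar>e\<bar> = \<bar>d\<bar>" for e
  proof (cases "e = 0")
    case True
    then show ?thesis by (intro exI[of _ z]) (simp add: numeral_eq_Suc)
  next
    case False
    have "\<exists>t. (if z + e < z then z + e < t \<and> t < z else z < t \<and> t < z + e) \<and>
        f 0 (z + e) = (\<Sum>m<5. f m z / fact m * (z + e - z)^m) + f 5 t / fact 5 * (z + e - z)^5"
      by (rule Taylor[where a = "z - \<bar>d\<bar>" and b = "z + \<bar>d\<bar>"]) (use deriv that False in auto)
    then obtain t where "if z + e < z then z + e < t \<and> t < z else z < t \<and> t < z + e"
      and "f 0 (z + e) = (\<Sum>m<5. f m z / fact m * (z + e - z)^m) + f 5 t / fact 5 * (z + e - z)^5"
      by blast
    then show ?thesis
      using that by (intro exI[of _ t]) (auto split: if_splits)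
  qed
  obtain \<xi>1 \<xi>2 where "\<bar>\<xi>1 - z\<bar> \<le> \<bar>d\<bar>" "\<bar>\<xi>2 - z\<bar> \<le> \<bar>d\<bar>"
    and "f 0 (z + d) = (\<Sum>m<5. f m z / fact m * d^m) + f 5 \<xi>1 / fact 5 * d^5"
    and "f 0 (z + - d) = (\<Sum>m<5. f m z / fact m * (- d)^m) + f 5 \<xi>2 / fact 5 * (- d)^5"
    using Taylor5[of d] Taylor5[of "- d"] by auto
  then show ?thesis
    by (intro exI[of _ \<xi>1] exI[of _ \<xi>2]) (simp add: numeral_eq_Suc fact_numeral field_simps)
qed

lemma eventually_odd_difference_Taylor5:
  fixes f :: "nat \<Rightarrow> real \<Rightarrow> real" and c :: "real \<Rightarrow> real"
  assumes "open U" and "c0 \<in> U"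
    and deriv: "\<And>m t. t \<in> U \<Longrightarrow> (f m has_real_derivative f (Suc m) t) (at t)"
    and c: "(c \<longlongrightarrow> c0) (at_right 0)"
  obtains \<xi>1 \<xi>2 where "(\<xi>1 \<longlongrightarrow> c0) (at_right 0)" and "(\<xi>2 \<longlongrightarrow> c0) (at_right 0)"
    and "eventually (\<lambda>b. f 0 (c b + b * p) - f 0 (c b - b * p) = 2 * f 1 (c b) * (b * p)
           + f 3 (c b) * (b * p)^3 / 3 + (f 5 (\<xi>1 b) + f 5 (\<xi>2 b)) * (b * p)^5 / 120) (at_right 0)"
proof -
  obtain e where "e > 0" and ball: "ball c0 e \<subseteq> U"
    using \<open>open U\<close> \<open>c0 \<in> U\<close> open_contains_ball by blast
  have step: "((\<lambda>b. \<bar>b * p\<bar>) \<longlongrightarrow> 0) (at_right 0)"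
    by (intro tendsto_eq_intros) auto
  have "eventually (\<lambda>b. dist (c b) c0 < e / 2 \<and> \<bar>b * p\<bar> < e / 2) (at_right 0)"
    using tendstoD[OF c, of "e / 2"] order_tendstoD(2)[OF step, of "e / 2"] \<open>e > 0\<close>
    by (auto simp: eventually_conj_iff)
  then have "eventually (\<lambda>b. \<exists>\<xi>1 \<xi>2. \<bar>\<xi>1 - c b\<bar> \<le> \<bar>b * p\<bar> \<and> \<bar>\<xi>2 - c b\<bar> \<le> \<bar>b * p\<bar> \<and>
      f 0 (c b + b * p) - f 0 (c b - b * p) = 2 * f 1 (c b) * (b * p) + f 3 (c b) * (b * p)^3 / 3
        + (f 5 \<xi>1 + f 5 \<xi>2) * (b * p)^5 / 120) (at_right 0)"
  proof eventually_elim
    case (elim b)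
    have "t \<in> ball c0 e" if "\<bar>t - c b\<bar> \<le> \<bar>b * p\<bar>" for t
      using elim that by (simp only: mem_ball dist_real_def) arith
    with ball show ?case
      by (intro odd_difference_Taylor5 deriv) blast
  qed
  then obtain \<xi>1 \<xi>2 where ev: "eventually (\<lambda>b. \<bar>\<xi>1 b - c b\<bar> \<le> \<bar>b * p\<bar> \<and> \<bar>\<xi>2 b - c b\<bar> \<le> \<bar>b * p\<bar> \<and>
      f 0 (c b + b * p) - f 0 (c b - b * p) = 2 * f 1 (c b) * (b * p) + f 3 (c b) * (b * p)^3 / 3
        + (f 5 (\<xi>1 b) + f 5 (\<xi>2 b)) * (b * p)^5 / 120) (at_right 0)"
    unfolding eventually_ex by blast
  have tendsto_c0: "(\<xi> \<longlongrightarrow> c0) (at_right 0)"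
    if "eventually (\<lambda>b. \<bar>\<xi> b - c b\<bar> \<le> \<bar>b * p\<bar>) (at_right 0)" for \<xi>
  proof -
    have "((\<lambda>b. \<xi> b - c b) \<longlongrightarrow> 0) (at_right 0)"
      by (rule Lim_null_comparison[OF _ step]) (use that in \<open>auto elim!: eventually_mono\<close>)
    from tendsto_add[OF this c] show ?thesis
      by simp
  qed
  from ev show ?thesis
    unfolding eventually_conj_iff by (blast intro: that tendsto_c0)
qed

lemma odd_difference_remainder_tendsto:
  fixes f :: "nat \<Rightarrow> real \<Rightarrow> real" and c :: "real \<Rightarrow> real"
  assumes "open U" and "c0 \<in> U"
    and deriv: "\<And>m t. t \<in> U \<Longrightarrow> (f m has_real_derivative f (Suc m) t) (at t)"
    and "(c \<longlongrightarrow> c0) (at_right 0)"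
  shows "((\<lambda>b. (f 0 (c b + b * p) - f 0 (c b - b * p) - 2 * f 1 (c b) * (b * p) - f 3 (c b) * (b * p)^3 / 3)
               / b^5) \<longlongrightarrow> f 5 c0 * p^5 / 60) (at_right 0)"
proof -
  obtain \<xi>1 \<xi>2 where "(\<xi>1 \<longlongrightarrow> c0) (at_right 0)" "(\<xi>2 \<longlongrightarrow> c0) (at_right 0)"
    and ev: "eventually (\<lambda>b. f 0 (c b + b * p) - f 0 (c b - b * p) = 2 * f 1 (c b) * (b * p)
           + f 3 (c b) * (b * p)^3 / 3 + (f 5 (\<xi>1 b) + f 5 (\<xi>2 b)) * (b * p)^5 / 120) (at_right 0)"
    using eventually_odd_difference_Taylor5[where f = f and c = c and p = p, OF assms] by blast
  moreover have "isCont (f 5) c0"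
    using deriv[OF \<open>c0 \<in> U\<close>] by (rule DERIV_isCont)
  ultimately have "((\<lambda>b. (f 5 (\<xi>1 b) + f 5 (\<xi>2 b)) * p^5 / 120) \<longlongrightarrow> (f 5 c0 + f 5 c0) * p^5 / 120) (at_right 0)"
    by (intro tendsto_intros isCont_tendsto_compose[of c0 "f 5"]) auto
  then have lim: "((\<lambda>b. (f 5 (\<xi>1 b) + f 5 (\<xi>2 b)) * p^5 / 120) \<longlongrightarrow> f 5 c0 * p^5 / 60) (at_right 0)"
    by (simp add: field_simps)
  have "eventually (\<lambda>b. (f 5 (\<xi>1 b) + f 5 (\<xi>2 b)) * p^5 / 120 =
      (f 0 (c b + b * p) - f 0 (c b - b * p) - 2 * f 1 (c b) * (b * p) - f 3 (c b) * (b * p)^3 / 3) / b^5) (at_right 0)"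
    using ev eventually_at_right_less[of 0]
  proof eventually_elim
    case (elim b)
    have "(f 5 (\<xi>1 b) + f 5 (\<xi>2 b)) * (b * p)^5 / 120 = (f 5 (\<xi>1 b) + f 5 (\<xi>2 b)) * p^5 / 120 * b^5"
      by (simp add: power_mult_distrib)
    with elim(1) have "f 0 (c b + b * p) - f 0 (c b - b * p) - 2 * f 1 (c b) * (b * p) - f 3 (c b) * (b * p)^3 / 3
        = (f 5 (\<xi>1 b) + f 5 (\<xi>2 b)) * p^5 / 120 * b^5"
      by linarith
    with elim(2) show ?case
      by simp
  qed
  with lim show ?thesis
    by (rule Lim_transform_eventually)
qed

lemma fifth_derivative_eq_if_odd_differences_vanish:
  fixes f :: "nat \<Rightarrow> real \<Rightarrow> real" and c d :: "real \<Rightarrow> real" and p :: "'i \<Rightarrow> real"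
  assumes "open U" and "z \<in> U" and "w \<in> U"
    and deriv: "\<And>m t. t \<in> U \<Longrightarrow> (f m has_real_derivative f (Suc m) t) (at t)"
    and c: "(c \<longlongrightarrow> z) (at_right 0)" and d: "(d \<longlongrightarrow> w) (at_right 0)"
    and sum1: "(\<Sum>k\<in>I. p k) = 0" and sum3: "(\<Sum>k\<in>I. p k ^ 3) = 0"
    and sum5: "(\<Sum>k\<in>I. p k ^ 5) \<noteq> 0"
    and vanish: "eventually (\<lambda>b. (\<Sum>k\<in>I. (f 0 (c b + b * p k) - f 0 (c b - b * p k))
                                     - (f 0 (d b + b * p k) - f 0 (d b - b * p k))) = 0) (at_right 0)"
  shows "f 5 z = f 5 w"
proof -
  define rem where "rem g b k = (f 0 (g b + b * p k) - f 0 (g b - b * p k) - 2 * f 1 (g b) * (b * p k)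
      - f 3 (g b) * (b * p k)^3 / 3) / b^5" for g :: "real \<Rightarrow> real" and b k
  have lim: "((\<lambda>b. \<Sum>k\<in>I. rem c b k - rem d b k) \<longlongrightarrow> (\<Sum>k\<in>I. f 5 z * p k ^ 5 / 60 - f 5 w * p k ^ 5 / 60)) (at_right 0)"
    unfolding rem_def
    by (intro tendsto_sum tendsto_diff odd_difference_remainder_tendsto[OF \<open>open U\<close>] deriv c d \<open>z \<in> U\<close> \<open>w \<in> U\<close>)
  have odd_part_cancels: "(\<Sum>k\<in>I. 2 * f 1 (g b) * (b * p k) + f 3 (g b) * (b * p k)^3 / 3) = 0" for g :: "real \<Rightarrow> real" and b
  proof -
    have "(\<Sum>k\<in>I. 2 * f 1 (g b) * (b * p k) + f 3 (g b) * (b * p k)^3 / 3)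
        = (\<Sum>k\<in>I. (2 * f 1 (g b) * b) * p k + (f 3 (g b) * b^3 / 3) * p k ^ 3)"
      by (intro sum.cong refl) (simp add: power_mult_distrib field_simps)
    also have "\<dots> = 2 * f 1 (g b) * b * (\<Sum>k\<in>I. p k) + f 3 (g b) * b^3 / 3 * (\<Sum>k\<in>I. p k ^ 3)"
      by (simp add: sum.distrib sum_distrib_left)
    finally show ?thesis using sum1 sum3 by simp
  qed
  have "eventually (\<lambda>b. (\<Sum>k\<in>I. rem c b k - rem d b k) = 0) (at_right 0)"
    using vanish
  proof eventually_elim
    case (elim b)
    have "(\<Sum>k\<in>I. rem c b k - rem d b k) =
        ((\<Sum>k\<in>I. (f 0 (c b + b * p k) - f 0 (c b - b * p k)) - (f 0 (d b + b * p k) - f 0 (d b - b * p k)))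
         - (\<Sum>k\<in>I. 2 * f 1 (c b) * (b * p k) + f 3 (c b) * (b * p k)^3 / 3)
         + (\<Sum>k\<in>I. 2 * f 1 (d b) * (b * p k) + f 3 (d b) * (b * p k)^3 / 3)) / b^5"
      unfolding rem_def by (simp add: sum_divide_distrib sum_subtractf sum.distrib diff_divide_distrib add_divide_distrib)
    then show ?case using elim odd_part_cancels by simp
  qed
  then have "((\<lambda>b. \<Sum>k\<in>I. rem c b k - rem d b k) \<longlongrightarrow> 0) (at_right 0)"
    by (rule tendsto_eventually)
  with lim have "(\<Sum>k\<in>I. f 5 z * p k ^ 5 / 60 - f 5 w * p k ^ 5 / 60) = 0"
    by (rule tendsto_unique[rotated]) simp
  then have "(f 5 z - f 5 w) * (\<Sum>k\<in>I. p k ^ 5) = 0"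
    by (simp add: sum_distrib_left sum_subtractf left_diff_distrib sum_divide_distrib[symmetric])
  with sum5 show ?thesis by simp
qed

definition powr_affine_deriv :: "real \<Rightarrow> real \<Rightarrow> nat \<Rightarrow> real \<Rightarrow> real" where
  "powr_affine_deriv K \<mu> m z = (\<Prod>k<m. \<mu> - real k) * (-2)^m * (K - 2 * z) powr (\<mu> - real m)"

lemma powr_affine_deriv_0: "powr_affine_deriv K \<mu> 0 z = (K - 2 * z) powr \<mu>"
  by (simp add: powr_affine_deriv_def)

lemma has_real_derivative_powr_affine_deriv:
  assumes "2 * z < K"
  shows "(powr_affine_deriv K \<mu> m has_real_derivative powr_affine_deriv K \<mu> (Suc m) z) (at z)"
proof -
  have "((\<lambda>z. (K - 2 * z) powr (\<mu> - real m)) has_real_derivative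
          (\<mu> - real m) * (K - 2 * z) powr (\<mu> - real m - 1) * (-2)) (at z)"
    using DERIV_fun_powr[of "\<lambda>z. K - 2 * z" "-2" z "\<mu> - real m"] assms
    by (auto intro!: derivative_eq_intros)
  then have "((\<lambda>z. (\<Prod>k<m. \<mu> - real k) * (-2)^m * (K - 2 * z) powr (\<mu> - real m)) has_real_derivative
      (\<Prod>k<m. \<mu> - real k) * (-2)^m * ((\<mu> - real m) * (K - 2 * z) powr (\<mu> - real m - 1) * (-2))) (at z)"
    by (rule DERIV_cmult)
  moreover have "\<mu> - real m - 1 = \<mu> - real (Suc m)"
    by simp
  ultimately show ?thesis
    unfolding powr_affine_deriv_def[abs_def] by (simp add: algebra_simps)
qed

lemma powr_eq_imp_base_eq:
  fixes x y e :: real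
  assumes "x > 0" "y > 0" "e \<noteq> 0" "x powr e = y powr e"
  shows "x = y"
proof -
  have "x = (x powr e) powr (1 / e)"
    using assms(1,3) by (simp add: powr_powr)
  also have "\<dots> = y"
    using assms(2-4) by (simp add: powr_powr)
  finally show ?thesis .
qed

lemma powr_affine_deriv_eq_imp_nat:
  assumes "z1 \<noteq> z2" "2 * z1 < K" "2 * z2 < K"
    and "powr_affine_deriv K \<mu> m z1 = powr_affine_deriv K \<mu> m z2"
  shows "\<exists>k\<le>m. \<mu> = real k"
proof (cases "(\<Prod>k<m. \<mu> - real k) = 0")
  case True
  then show ?thesis by force
next
  case False
  then have "(K - 2 * z1) powr (\<mu> - real m) = (K - 2 * z2) powr (\<mu> - real m)"
    using assms(4) by (simp add: powr_affine_deriv_def)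
  with assms(1-3) have "\<mu> - real m = 0"
    using powr_eq_imp_base_eq[of "K - 2 * z1" "K - 2 * z2" "\<mu> - real m"] by fastforce
  then show ?thesis by auto
qed

lemma dist_powr_eq_inner:
  fixes x y :: "'a::real_inner"
  shows "dist y x powr e = (norm y ^ 2 + norm x ^ 2 - 2 * inner y x) powr (e / 2)"
proof -
  have "dist y x powr e = (dist y x powr 2) powr (e / 2)"
    by (simp only: powr_powr) simp
  also have "dist y x powr 2 = norm y ^ 2 + norm x ^ 2 - 2 * inner y x"
    by (simp add: dist_norm power2_norm_eq_inner inner_diff_left inner_diff_right inner_commute)
  finally show ?thesis .
qed

lemma eventually_at_right_not_in_finite:
  fixes S :: "real set"
  assumes "finite S"
  shows "eventually (\<lambda>b. b \<notin> S) (at_right a)"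
proof -
  have "open (- (S - {a}))"
    by (rule open_Compl, rule finite_imp_closed) (use assms in simp)
  then have "eventually (\<lambda>b. b \<notin> S) (at a)"
    unfolding eventually_at_topological by (intro exI[of _ "- (S - {a})"]) auto
  then show ?thesis
    by (rule filter_leD[OF at_le, rotated]) simp
qed

lemma golden_sq: "golden ^ 2 = golden + 1"
  by (simp add: golden_def power2_eq_square field_simps)

lemma golden_gt_1: "golden > 1"
  by (simp add: golden_def)

lemma vector3_eq_iff: "(vector [a, b, c] :: real^3) = vector [a', b', c'] \<longleftrightarrow> a = a' \<and> b = b' \<and> c = c'"
  by (simp add: vec_eq_iff forall_3)

lemma vector3_uminus: "- (vector [a, b, c] :: real^3) = vector [- a, - b, - c]"
  by (simp add: vec_eq_iff forall_3)

lemma inner_vector3: "inner (vector [a, b, c] :: real^3) (vector [a', b', c']) = a * a' + b * b' + c * c'"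
  by (simp add: inner_vec_def sum_3)

definition ico_apex :: "real^3" where
  "ico_apex = vector [0, 1, golden]"

text \<open>The five vertices adjacent to \<open>ico_apex\<close>.\<close>
definition ico_ring :: "(real^3) list" where
  "ico_ring = [vector [0, -1, golden], vector [golden, 0, 1], vector [1, golden, 0],
               vector [-1, golden, 0], vector [-golden, 0, 1]]"

definition ico_tangent :: "real^3" where
  "ico_tangent = vector [0, - (golden + 1), golden]"

lemma std_icosahedron_eq_set:
  "std_icosahedron = set (ico_apex # - ico_apex # ico_ring @ map uminus ico_ring)"
proof -
  have "golden = t * golden \<longleftrightarrow> t = 1" "- golden = t * golden \<longleftrightarrow> t = -1" for t
    using golden_gt_1 by (metis mult_cancel_right mult_minus_left mult_1 not_one_less_zero)+
  then show ?thesis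
    unfolding std_icosahedron_def ico_apex_def ico_ring_def
    by (auto simp: vector3_uminus vector3_eq_iff)
qed

lemma distinct_std_icosahedron_list: "distinct (ico_apex # - ico_apex # ico_ring @ map uminus ico_ring)"
  using golden_gt_1 by (auto simp: ico_apex_def ico_ring_def vector3_uminus vector3_eq_iff)

lemma sum_ico_ring: "(\<Sum>x\<in>set ico_ring. h x) = sum_list (map h ico_ring)"
  using distinct_std_icosahedron_list by (simp add: sum_list_distinct_conv_sum_set)

lemma sum_std_icosahedron:
  "(\<Sum>x\<in>std_icosahedron. h x) = h ico_apex + h (- ico_apex) + (\<Sum>x\<in>set ico_ring. h x + h (- x))"
proof -
  have "(\<Sum>x\<in>std_icosahedron. h x) = sum_list (map h (ico_apex # - ico_apex # ico_ring @ map uminus ico_ring))"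
    unfolding std_icosahedron_eq_set
    using distinct_std_icosahedron_list by (rule sum_list_distinct_conv_sum_set[symmetric])
  then show ?thesis
    by (simp add: sum_ico_ring sum_list_addf o_def add.assoc)
qed

lemma norm_std_icosahedron: "x \<in> std_icosahedron \<Longrightarrow> norm x ^ 2 = golden + 2"
  using golden_sq unfolding std_icosahedron_eq_set power2_norm_eq_inner
  by (auto simp: ico_apex_def ico_ring_def vector3_uminus inner_vector3 power2_eq_square)

lemma inner_ico_apex_ico_apex: "inner ico_apex ico_apex = golden + 2"
  using golden_sq by (simp add: ico_apex_def inner_vector3 power2_eq_square)

lemma inner_ico_apex_ico_ring: "x \<in> set ico_ring \<Longrightarrow> inner ico_apex x = golden"
  using golden_sq by (auto simp: ico_apex_def ico_ring_def inner_vector3 power2_eq_square)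

lemma inner_ico_apex_ico_tangent: "inner ico_apex ico_tangent = 0"
  using golden_sq by (simp add: ico_apex_def ico_tangent_def inner_vector3 power2_eq_square)

lemma inner_ico_tangent_ico_tangent: "inner ico_tangent ico_tangent = 4 * golden + 3"
  using golden_sq by (simp add: ico_tangent_def inner_vector3 power2_eq_square algebra_simps)

lemma inner_ico_tangent_ico_ring:
  "map (inner ico_tangent) ico_ring = [2 * golden + 2, golden, - (2 * golden + 1), - (2 * golden + 1), golden]"
  using golden_sq by (simp add: ico_tangent_def ico_ring_def inner_vector3 power2_eq_square algebra_simps)

lemma sum_ico_ring_inner_ico_tangent:
  fixes h :: "real \<Rightarrow> real"
  shows "(\<Sum>x\<in>set ico_ring. h (inner ico_tangent x)) =
     h (2 * golden + 2) + 2 * h golden + 2 * h (- (2 * golden + 1))"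
proof -
  have "(\<Sum>x\<in>set ico_ring. h (inner ico_tangent x)) = sum_list (map h (map (inner ico_tangent) ico_ring))"
    by (simp add: sum_ico_ring o_def)
  then show ?thesis
    unfolding inner_ico_tangent_ico_ring by (simp only: list.map sum_list.Cons sum_list.Nil)
qed

lemma ico_ring_moment_1: "(\<Sum>x\<in>set ico_ring. inner ico_tangent x) = 0"
  using sum_ico_ring_inner_ico_tangent[of "\<lambda>t. t"] by simp

lemma ico_ring_moment_3: "(\<Sum>x\<in>set ico_ring. inner ico_tangent x ^ 3) = 0"
proof -
  have "(2 * golden + 2) ^ 3 + 2 * golden ^ 3 + 2 * (- (2 * golden + 1)) ^ 3 = 0"
    using golden_sq by algebra
  then show ?thesis
    using sum_ico_ring_inner_ico_tangent[of "\<lambda>t. t ^ 3"] by simp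
qed

lemma ico_ring_moment_5: "(\<Sum>x\<in>set ico_ring. inner ico_tangent x ^ 5) \<noteq> 0"
proof -
  have "(2 * golden + 2) ^ 5 + 2 * golden ^ 5 + 2 * (- (2 * golden + 1)) ^ 5 = 550 * golden + 340"
    using golden_sq by algebra
  then show ?thesis
    using sum_ico_ring_inner_ico_tangent[of "\<lambda>t. t ^ 5"] golden_gt_1 by simp
qed

definition ico_height :: "real \<Rightarrow> real \<Rightarrow> real" where
  "ico_height \<rho> b = sqrt ((\<rho>^2 - (4 * golden + 3) * b^2) / (golden + 2))"

definition ico_path :: "real \<Rightarrow> real \<Rightarrow> real^3" where
  "ico_path \<rho> b = ico_height \<rho> b *\<^sub>R ico_apex + b *\<^sub>R ico_tangent"

lemma ico_height_uminus [simp]: "ico_height \<rho> (- b) = ico_height \<rho> b"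
  by (simp add: ico_height_def)

lemma ico_height_0_pos: "\<rho> > 0 \<Longrightarrow> ico_height \<rho> 0 > 0"
  using golden_gt_1 by (simp add: ico_height_def)

lemma tendsto_ico_height: "(ico_height \<rho> \<longlongrightarrow> ico_height \<rho> 0) (at_right 0)"
proof -
  have "isCont (ico_height \<rho>) 0"
    unfolding ico_height_def[abs_def] using golden_gt_1 by (intro continuous_intros) simp
  then show ?thesis
    unfolding isCont_def by (rule tendsto_mono[OF at_le, rotated]) simp
qed

lemma ico_height_0_bound:
  assumes "\<rho> > 0"
  shows "2 * (ico_height \<rho> 0 * golden) < \<rho>^2 + (golden + 2)"
proof -
  define a where "a = ico_height \<rho> 0"
  have "a > 0" "golden > 0"
    using ico_height_0_pos[OF assms] golden_gt_1 by (simp_all add: a_def)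
  then have "2 * (a * golden) < 2 * a * (golden + 2)"
    by simp
  also have "\<dots> \<le> (a^2 + 1) * (golden + 2)"
    using \<open>golden > 0\<close> sum_squares_bound[of a 1] by (intro mult_right_mono) simp_all
  also have "\<dots> = \<rho>^2 + (golden + 2)"
    using \<open>golden > 0\<close> by (simp add: a_def ico_height_def field_simps add_pos_pos)
  finally show ?thesis
    by (simp add: a_def)
qed

lemma norm_ico_path:
  assumes "(4 * golden + 3) * b^2 \<le> \<rho>^2" and "\<rho> \<ge> 0"
  shows "norm (ico_path \<rho> b) = \<rho>"
proof -
  have "golden + 2 > 0"
    using golden_gt_1 by simp
  with assms(1) have "(ico_height \<rho> b)^2 = (\<rho>^2 - (4 * golden + 3) * b^2) / (golden + 2)"
    by (simp add: ico_height_def)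
  then have "inner (ico_path \<rho> b) (ico_path \<rho> b) = \<rho>^2"
    using \<open>golden + 2 > 0\<close>
    by (simp add: ico_path_def inner_add_left inner_add_right inner_commute inner_ico_apex_ico_apex
        inner_ico_apex_ico_tangent inner_ico_tangent_ico_tangent power2_eq_square field_simps)
  then show ?thesis
    using assms(2) by (simp add: norm_eq_sqrt_inner)
qed

lemma inner_ico_path_ico_tangent: "inner (ico_path \<rho> b) ico_tangent = (4 * golden + 3) * b"
  by (simp add: ico_path_def inner_add_left inner_ico_apex_ico_tangent inner_ico_tangent_ico_tangent)

lemma inner_ico_path_ico_apex: "inner (ico_path \<rho> b) ico_apex = ico_height \<rho> b * (golden + 2)"
  by (simp add: ico_path_def inner_add_left inner_ico_apex_ico_apex inner_ico_apex_ico_tangent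
      inner_commute[of ico_tangent ico_apex])

lemma inner_ico_path_ico_ring:
  "x \<in> set ico_ring \<Longrightarrow> inner (ico_path \<rho> b) x = ico_height \<rho> b * golden + b * inner ico_tangent x"
  by (simp add: ico_path_def inner_add_left inner_ico_apex_ico_ring)

lemma eventually_ico_path_off_vertices:
  assumes "\<rho> > 0"
  shows "eventually (\<lambda>b. ico_path \<rho> b \<in> sphere 0 \<rho> - std_icosahedron \<and>
                          ico_path \<rho> (- b) \<in> sphere 0 \<rho> - std_icosahedron) (at_right 0)"
proof -
  define q where "q = 4 * golden + 3"
  have "q > 0"
    using golden_gt_1 by (simp add: q_def)
  define S where "S = (\<lambda>x. inner x ico_tangent / q) ` std_icosahedron"
  have vertex: "b \<in> S" if "ico_path \<rho> b \<in> std_icosahedron" for b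
  proof -
    have "b = inner (ico_path \<rho> b) ico_tangent / q"
      using \<open>q > 0\<close> by (simp add: inner_ico_path_ico_tangent q_def)
    with that show ?thesis
      unfolding S_def by (rule image_eqI[rotated])
  qed
  have "finite S"
    by (simp add: S_def std_icosahedron_eq_set)
  have "eventually (\<lambda>b. q * b^2 < \<rho>^2) (at_right 0)"
    using \<open>\<rho> > 0\<close> by (intro order_tendstoD(2)[of _ 0]) (auto intro!: tendsto_eq_intros)
  moreover have "eventually (\<lambda>b. b \<notin> S \<union> uminus ` S) (at_right 0)"
    using \<open>finite S\<close> by (intro eventually_at_right_not_in_finite) auto
  ultimately show ?thesis
    by eventually_elim (use \<open>\<rho> > 0\<close> in \<open>auto dest!: vertex intro!: norm_ico_path simp: image_iff q_def\<close>)
qed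

lemma sum_std_icosahedron_ico_path:
  "(\<Sum>x\<in>std_icosahedron. h (inner (ico_path \<rho> b) x)) =
     h (ico_height \<rho> b * (golden + 2)) + h (- (ico_height \<rho> b * (golden + 2))) +
     (\<Sum>x\<in>set ico_ring. h (ico_height \<rho> b * golden + b * inner ico_tangent x)
                       + h (- (ico_height \<rho> b * golden + b * inner ico_tangent x)))"
  unfolding sum_std_icosahedron by (simp add: inner_ico_path_ico_apex inner_ico_path_ico_ring cong: sum.cong)

lemma std_icosahedron_odd_differences_vanish:
  fixes \<rho> lam C :: real
  assumes "\<rho> > 0"
    and const: "\<forall>y \<in> sphere 0 \<rho> - std_icosahedron. (\<Sum>x\<in>std_icosahedron. dist y x powr lam) = C"
  defines "H \<equiv> powr_affine_deriv (\<rho>^2 + (golden + 2)) (lam / 2) 0"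
  shows "eventually (\<lambda>b. (\<Sum>x\<in>set ico_ring.
            (H (ico_height \<rho> b * golden + b * inner ico_tangent x)
               - H (ico_height \<rho> b * golden - b * inner ico_tangent x))
          - (H (- (ico_height \<rho> b * golden) + b * inner ico_tangent x)
               - H (- (ico_height \<rho> b * golden) - b * inner ico_tangent x))) = 0) (at_right 0)"
  using eventually_ico_path_off_vertices[OF \<open>\<rho> > 0\<close>]
proof eventually_elim
  case (elim b)
  have sum_as_H: "(\<Sum>x\<in>std_icosahedron. dist z x powr lam) = (\<Sum>x\<in>std_icosahedron. H (inner z x))"
    if "z \<in> sphere 0 \<rho>" for z
    using that norm_std_icosahedron
    by (intro sum.cong refl) (simp add: dist_powr_eq_inner H_def powr_affine_deriv_0)
  from elim have "(\<Sum>x\<in>std_icosahedron. H (inner (ico_path \<rho> b) x)) =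
                  (\<Sum>x\<in>std_icosahedron. H (inner (ico_path \<rho> (- b)) x))"
    using const sum_as_H by auto
  then have "(\<Sum>x\<in>set ico_ring.
        (H (ico_height \<rho> b * golden + b * inner ico_tangent x)
           + H (- (ico_height \<rho> b * golden + b * inner ico_tangent x)))
      - (H (ico_height \<rho> b * golden + - b * inner ico_tangent x)
           + H (- (ico_height \<rho> b * golden + - b * inner ico_tangent x)))) = 0"
    unfolding sum_std_icosahedron_ico_path ico_height_uminus sum_subtractf by simp
  then show ?case
    by (rule trans[OF sum.cong[OF refl], rotated]) (simp add: algebra_simps)
qed

lemma std_icosahedron_constant_sum_exponent:
  fixes \<rho> lam C :: real
  assumes "\<rho> > 0"
    and "\<forall>y \<in> sphere 0 \<rho> - std_icosahedron. (\<Sum>x\<in>std_icosahedron. dist y x powr lam) = C"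
  shows "lam \<in> {0, 2, 4, 6, 8, 10}"
proof -
  define K where "K = \<rho>^2 + (golden + 2)"
  define H where "H = powr_affine_deriv K (lam / 2)"
  define z where "z = ico_height \<rho> 0 * golden"
  have "2 * z < K" "z > 0"
    using ico_height_0_bound[OF \<open>\<rho> > 0\<close>] ico_height_0_pos[OF \<open>\<rho> > 0\<close>] golden_gt_1
    by (simp_all add: z_def K_def)
  have "H 5 z = H 5 (- z)"
  proof (rule fifth_derivative_eq_if_odd_differences_vanish[where f = H and U = "{z. 2 * z < K}"
        and c = "\<lambda>b. ico_height \<rho> b * golden" and d = "\<lambda>b. - (ico_height \<rho> b * golden)"
        and I = "set ico_ring" and p = "inner ico_tangent"])
    show "open {z. 2 * z < K}"
      by (intro open_Collect_less continuous_intros)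
    show "z \<in> {z. 2 * z < K}" "- z \<in> {z. 2 * z < K}"
      using \<open>2 * z < K\<close> \<open>z > 0\<close> by auto
    show "(H m has_real_derivative H (Suc m) t) (at t)" if "t \<in> {z. 2 * z < K}" for m t
      using that unfolding H_def by (simp add: has_real_derivative_powr_affine_deriv)
    show "((\<lambda>b. ico_height \<rho> b * golden) \<longlongrightarrow> z) (at_right 0)"
      "((\<lambda>b. - (ico_height \<rho> b * golden)) \<longlongrightarrow> - z) (at_right 0)"
      using tendsto_mult_right[OF tendsto_ico_height[of \<rho>], of golden] by (auto simp: z_def intro: tendsto_minus)
  qed (use std_icosahedron_odd_differences_vanish[OF assms]
         ico_ring_moment_1 ico_ring_moment_3 ico_ring_moment_5 in \<open>simp_all add: H_def K_def\<close>)
  moreover have "z \<noteq> - z" "2 * - z < K"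
    using \<open>2 * z < K\<close> \<open>z > 0\<close> by linarith+
  ultimately have "\<exists>k\<le>5. lam / 2 = real k"
    unfolding H_def using \<open>2 * z < K\<close> powr_affine_deriv_eq_imp_nat by blast
  then show ?thesis
    by (auto simp: le_Suc_eq numeral_eq_Suc)
qed

lemma dist_scaleR_orthogonal_transformation:
  assumes "orthogonal_transformation f" "c \<ge> 0"
  shows "dist (c *\<^sub>R f y) (c *\<^sub>R f x) = c * dist y x"
proof -
  have "c *\<^sub>R f y - c *\<^sub>R f x = c *\<^sub>R f (y - x)"
    using orthogonal_transformation_linear[OF assms(1)] by (simp add: linear_diff scaleR_diff_right)
  then show ?thesis
    using assms by (simp add: dist_norm orthogonal_transformation_norm)
qed

lemma std_icosahedron_constant_sum_if_regular:
  fixes A :: "nat \<Rightarrow> real^3"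
  assumes "inj_on A {1..12}" and "regular_icosahedron (A ` {1..12}) Ctr" and "R > 0"
    and C: "\<forall>M \<in> sphere Ctr R - A ` {1..12}. (\<Sum>i=1..12. dist M (A i) powr lam) = C"
  obtains \<rho> C' where "\<rho> > 0"
    and "\<forall>y \<in> sphere 0 \<rho> - std_icosahedron. (\<Sum>x\<in>std_icosahedron. dist y x powr lam) = C'"
proof -
  obtain f c where f: "orthogonal_transformation f" and "c > 0"
    and vertices: "A ` {1..12} = (\<lambda>x. Ctr + c *\<^sub>R f x) ` std_icosahedron"
    using assms(2) unfolding regular_icosahedron_def by blast
  define \<phi> where "\<phi> x = Ctr + c *\<^sub>R f x" for x
  have vertices_\<phi>: "A ` {1..12} = \<phi> ` std_icosahedron"
    unfolding \<phi>_def[abs_def] by (rule vertices)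
  have dist_\<phi>: "dist (\<phi> y) (\<phi> x) = c * dist y x" for x y
    unfolding \<phi>_def using f \<open>c > 0\<close> by (simp add: dist_scaleR_orthogonal_transformation)
  then have "inj \<phi>"
    using \<open>c > 0\<close> by (intro injI) (metis dist_eq_0_iff mult_eq_0_iff less_irrefl)
  have "(\<Sum>x\<in>std_icosahedron. dist y x powr lam) = C / c powr lam"
    if y: "y \<in> sphere 0 (R / c) - std_icosahedron" for y
  proof -
    have "\<phi> y \<in> sphere Ctr R"
      using y \<open>c > 0\<close> f by (simp add: \<phi>_def dist_norm orthogonal_transformation_norm)
    moreover have "\<phi> y \<notin> A ` {1..12}"
      using y \<open>inj \<phi>\<close> unfolding vertices_\<phi> by (simp add: inj_image_mem_iff)
    ultimately have "C = (\<Sum>i=1..12. dist (\<phi> y) (A i) powr lam)"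
      using C by simp
    also have "\<dots> = (\<Sum>v\<in>A ` {1..12}. dist (\<phi> y) v powr lam)"
      by (simp only: sum.reindex[OF assms(1)] comp_def)
    also have "\<dots> = (\<Sum>x\<in>std_icosahedron. dist (\<phi> y) (\<phi> x) powr lam)"
      by (simp only: vertices_\<phi> sum.reindex[OF inj_on_subset[OF \<open>inj \<phi>\<close> subset_UNIV]] comp_def)
    also have "\<dots> = c powr lam * (\<Sum>x\<in>std_icosahedron. dist y x powr lam)"
      using \<open>c > 0\<close> by (simp add: dist_\<phi> powr_mult sum_distrib_left)
    finally show ?thesis
      using \<open>c > 0\<close> by (simp add: field_simps)
  qed
  with \<open>R > 0\<close> \<open>c > 0\<close> show ?thesis
    by (intro that[of "R / c" "C / c powr lam"]) auto
qed

theorem proposition5p2: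
  fixes A :: "nat \<Rightarrow> real^3" and Ctr :: "real^3" and R :: real and lam :: real
  assumes "inj_on A {1..12}"
    and "regular_icosahedron (A ` {1..12}) Ctr"
    and "R > 0"
    and "\<exists>C. \<forall>M \<in> sphere Ctr R - A ` {1..12}. (\<Sum>i=1..12. dist M (A i) powr lam) = C"
  shows "lam \<in> {0, 2, 4, 6, 8, 10}"
proof -
  obtain C where "\<forall>M \<in> sphere Ctr R - A ` {1..12}. (\<Sum>i=1..12. dist M (A i) powr lam) = C"
    using assms(4) by blast
  then obtain \<rho> C' where "\<rho> > 0"
    and "\<forall>y \<in> sphere 0 \<rho> - std_icosahedron. (\<Sum>x\<in>std_icosahedron. dist y x powr lam) = C'"
    using std_icosahedron_constant_sum_if_regular[OF assms(1-3)] by blast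
  then show ?thesis
    by (rule std_icosahedron_constant_sum_exponent)
qed

end
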